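(* Let $\alpha<0.3$ and let $\chi^2(k)_{1-\alpha}$ denote the $1-\alpha$ quantile of the $\chi^2(k)$ distribution. For a given $\beta$ with $\operatorname{rank}P(\beta)=k$, define the tests $\phi_{1,n}(\beta)=1$ if $(k\sigma_n^2(\beta))^{-1/2}(\mathrm{AR}(\beta)-k)>(2k)^{-1/2}(\chi^2(k)_{1-\alpha}-k)$ (and $0$ otherwise), and $\phi_{2,n}(\beta)=1$ if $\mathrm{AR}(\beta)>\chi^2(k)_{1-\alpha}$ (and $0$ otherwise). Then $\Pr(\phi_{1,n}(\beta)=1)\ge\Pr(\phi_{2,n}(\beta)=1)$.
   Context: GMM setting: independent observations $W_1,\dots,W_n$, moment functions $g_i(\beta)\in\mathbb R^k$, $G(\beta)$ the $n\times k$ matrix with rows $g_i(\beta)'$, $P(\beta)=G(\beta)(G(\beta)'G(\beta))^{-1}G(\beta)'$ with entries $P_{ij}(\beta)$, $\iota$ the $n$-vector of ones, $\mathrm{AR}(\beta)=\iota'P(\beta)\iota$, and $\sigma_n^2(\beta)=\frac{2}{k}\sum_{i\neq j}P_{ij}(\beta)^2$. *)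

theory Defs
  imports "HOL-Probability.Probability"
begin

definition chi2_density :: "nat \<Rightarrow> real \<Rightarrow> real" where
  "chi2_density k x =
     (if x > 0 then x powr (real k / 2 - 1) * exp (- x / 2) / (2 powr (real k / 2) * Gamma (real k / 2))
      else 0)"

definition chi2_CDF :: "nat \<Rightarrow> real \<Rightarrow> real" where
  "chi2_CDF k c = (\<integral>x\<in>{..c}. chi2_density k x \<partial>lborel)"

definition Pmat :: "real^'k^'n \<Rightarrow> real^'n^'n" where
  "Pmat G = G ** matrix_inv (transpose G ** G) ** transpose G"

text \<open>AR = iota' P iota.\<close>
definition AR_stat :: "real^'k^'n \<Rightarrow> real" where
  "AR_stat G = (\<Sum>i\<in>UNIV. \<Sum>j\<in>UNIV. Pmat G $ i $ j)"

definition sigma2_stat :: "real^'k^'n \<Rightarrow> real" where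
  "sigma2_stat (G :: real^'k^'n) =
     2 / real CARD('k) * (\<Sum>i\<in>UNIV. \<Sum>j\<in>UNIV - {i}. (Pmat G $ i $ j)\<^sup>2)"

definition phi1 :: "real \<Rightarrow> real^'k^'n \<Rightarrow> real" where
  "phi1 c (G :: real^'k^'n) =
     (let k = real CARD('k) in
      if (AR_stat G - k) / sqrt (k * sigma2_stat G) > (c - k) / sqrt (2 * k) then 1 else 0)"

definition phi2 :: "real \<Rightarrow> real^'k^'n \<Rightarrow> real" where
  "phi2 c (G :: real^'k^'n) = (if AR_stat G > c then 1 else 0)"

end

theory Submission
  imports Defs
begin

text \<open>
  Both tests are functions of the same matrix \<open>G\<close>, and \<open>\<phi>\<^sub>2 = 1\<close> forces \<open>\<phi>\<^sub>1 = 1\<close>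
  pointwise.
  Since \<open>P\<close> is an orthogonal projection of rank \<open>k\<close>, \<open>\<Sum>\<^sub>i\<^sub>j P\<^sub>i\<^sub>j\<^sup>2 = tr P = k\<close>, hence
  \<open>\<sigma>\<^sub>n\<^sup>2 \<le> 2\<close> and the standardisation of \<open>\<phi>\<^sub>1\<close> divides by at most \<open>\<surd>(2k)\<close>; this helps
  as soon as the numerator \<open>AR - k\<close> is positive, i.e. as soon as the critical value
  exceeds \<open>k\<close>. That holds for \<open>\<alpha> < 0.3\<close> because the \<open>\<chi>\<^sup>2(k)\<close> CDF at its mean \<open>k\<close> is
  below \<open>0.7\<close>: integrating by parts shows that this value decreases when \<open>k\<close> increases
  by 2, and for \<open>k = 1, 2\<close> it is checked by hand.
\<close>

lemma rank_Pmat_le: "rank (Pmat G) \<le> rank G"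
  unfolding Pmat_def by (metis rank_mul_le_left order_trans)

lemma invertible_Gram_matrix:
  fixes G :: "real^'k^'n"
  assumes "rank G = CARD('k)"
  shows "invertible (transpose G ** G)"
proof -
  have inj: "inj ((*v) G)" using assms by (simp add: full_rank_injective)
  have "x = 0" if "(transpose G ** G) *v x = 0" for x
  proof -
    have "(G *v x) \<bullet> (G *v x) = x \<bullet> ((transpose G ** G) *v x)"
      by (metis dot_lmul_matrix matrix_vector_mul_assoc transpose_matrix_vector inner_commute)
    with that have "G *v x = G *v 0" by simp
    with inj show "x = 0" by (meson injD)
  qed
  then show ?thesis
    by (simp add: invertible_left_inverse matrix_left_invertible_ker)
qed

lemma matrix_inv_inverse:
  fixes A :: "'a::semiring_1^'n^'m"
  assumes "invertible A"
  shows "A ** matrix_inv A = mat 1" "matrix_inv A ** A = mat 1"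
  using someI_ex[OF assms[unfolded invertible_def]] by (simp_all add: matrix_inv_def)

lemma sum_squares_Pmat:
  fixes G :: "real^'k^'n"
  assumes "rank (Pmat G) = CARD('k)"
  shows "(\<Sum>i\<in>UNIV. \<Sum>j\<in>UNIV. (Pmat G $ i $ j)\<^sup>2) = real CARD('k)"
proof -
  define A where "A = matrix_inv (transpose G ** G)"
  have "rank G = CARD('k)"
    using assms rank_Pmat_le[of G] rank_bound[of G] by simp
  then have A: "A ** (transpose G ** G) = mat 1" "(transpose G ** G) ** A = mat 1"
    using matrix_inv_inverse invertible_Gram_matrix unfolding A_def by blast+
  have "(\<Sum>i\<in>UNIV. \<Sum>j\<in>UNIV. (Pmat G $ i $ j)\<^sup>2) = trace (Pmat G ** transpose (Pmat G))"
    by (simp add: trace_def matrix_matrix_mult_def transpose_def power2_eq_square)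
  also have "Pmat G ** transpose (Pmat G)
      = G ** (A ** (transpose G ** G)) ** transpose A ** transpose G"
    by (simp add: Pmat_def A_def matrix_transpose_mul matrix_mul_assoc)
  also have "trace \<dots> = trace (transpose ((transpose G ** G) ** A))"
    by (metis A(1) matrix_mul_rid trace_mul_sym matrix_mul_assoc matrix_transpose_mul transpose_transpose)
  finally show ?thesis by (simp add: A(2) trace_I)
qed

lemma sigma2_stat_le_2:
  fixes G :: "real^'k^'n"
  assumes "rank (Pmat G) = CARD('k)"
  shows "sigma2_stat G \<le> 2"
proof -
  have "(\<Sum>i\<in>UNIV. \<Sum>j\<in>UNIV - {i}. (Pmat G $ i $ j)\<^sup>2) \<le> (\<Sum>i\<in>UNIV. \<Sum>j\<in>UNIV. (Pmat G $ i $ j)\<^sup>2)"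
    by (intro sum_mono sum_mono2) auto
  then show ?thesis
    using sum_squares_Pmat[OF assms] by (simp add: sigma2_stat_def field_simps)
qed

lemma phi1_eq_1_if_phi2_eq_1:
  fixes G :: "real^'k^'n"
  assumes "0 < sigma2_stat G" "sigma2_stat G \<le> 2" "real CARD('k) < c" "phi2 c G = 1"
  shows "phi1 c G = 1"
proof -
  define k where "k = real CARD('k)"
  have "0 < k" by (simp add: k_def)
  have AR: "c < AR_stat G" using assms(4) by (simp add: phi2_def split: if_splits)
  have sqrt: "0 < sqrt (k * sigma2_stat G)" "sqrt (k * sigma2_stat G) \<le> sqrt (2 * k)"
    using assms(1,2) \<open>0 < k\<close> by auto
  have "0 < c - k" using assms(3) by (simp add: k_def)
  have "(c - k) / sqrt (2 * k) < (AR_stat G - k) / sqrt (2 * k)"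
    using AR \<open>0 < k\<close> by (intro divide_strict_right_mono) auto
  also have "\<dots> \<le> (AR_stat G - k) / sqrt (k * sigma2_stat G)"
    using sqrt AR \<open>0 < c - k\<close> by (intro divide_left_mono) auto
  finally have "(c - k) / sqrt (2 * k) < (AR_stat G - k) / sqrt (k * sigma2_stat G)" .
  then show ?thesis unfolding phi1_def Let_def k_def by simp
qed

lemma continuous_on_powr_exp:
  "0 < a \<Longrightarrow> continuous_on {0..X} (\<lambda>t::real. t powr a * exp (- t / 2))"
  by (intro continuous_intros continuous_on_powr') auto

lemma has_integral_powr_exp_by_parts:
  fixes a X :: real
  assumes "0 < a" "0 \<le> X"
  shows "((\<lambda>t. t powr (a - 1) * exp (- t / 2)) has_integral
           X powr a * exp (- X / 2) / a + integral {0..X} (\<lambda>t. t powr a * exp (- t / 2)) / (2 * a)) {0..X}"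
proof -
  let ?H = "\<lambda>t::real. t powr a * exp (- t / 2)"
  have "(?H has_vector_derivative (a * t powr (a - 1) * exp (- t / 2) - ?H t / 2)) (at t)"
    if "t \<in> {0<..<X}" for t
    using that unfolding has_real_derivative_iff_has_vector_derivative[symmetric]
    by (auto intro!: derivative_eq_intros simp: field_simps)
  then have "((\<lambda>t. a * t powr (a - 1) * exp (- t / 2) - ?H t / 2) has_integral ?H X - ?H 0) {0..X}"
    using assms by (intro fundamental_theorem_of_calculus_interior continuous_on_powr_exp)
  moreover have "((\<lambda>t. ?H t / 2) has_integral integral {0..X} ?H / 2) {0..X}"
    using assms by (intro has_integral_divide integrable_integral integrable_continuous_interval
        continuous_on_powr_exp)
  ultimately have "((\<lambda>t. (a * t powr (a - 1) * exp (- t / 2) - ?H t / 2 + ?H t / 2) / a) has_integral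
                     (?H X - ?H 0 + integral {0..X} ?H / 2) / a) {0..X}"
    by (rule has_integral_divide[OF has_integral_add])
  then show ?thesis using assms by (simp add: field_simps)
qed

lemma powr_exp_le_mode:
  fixes a t :: real
  assumes "0 < a" "0 \<le> t"
  shows "t powr a * exp (- t / 2) \<le> (2 * a) powr a * exp (- a)"
proof (cases "t = 0")
  case False
  with assms have "a * ln (t / (2 * a)) \<le> a * (t / (2 * a) - 1)"
    by (intro mult_left_mono ln_le_minus_one) auto
  also have "\<dots> = t / 2 - a" using assms by (simp add: field_simps)
  finally have "(t / (2 * a)) powr a \<le> exp (t / 2 - a)"
    using False assms by (simp add: powr_def)
  then have "(2 * a) powr a * (t / (2 * a)) powr a \<le> (2 * a) powr a * exp (t / 2 - a)"
    by (intro mult_left_mono) auto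
  then have "t powr a \<le> (2 * a) powr a * exp (t / 2 - a)"
    using False assms by (simp add: powr_mult[symmetric])
  then have "t powr a * exp (- t / 2) \<le> (2 * a) powr a * exp (t / 2 - a) * exp (- t / 2)"
    by (intro mult_right_mono) auto
  also have "\<dots> = (2 * a) powr a * exp (- a)"
    by (simp add: exp_add[symmetric])
  finally show ?thesis .
qed (use assms in simp)

definition chi2_normalizer :: "nat \<Rightarrow> real" where
  "chi2_normalizer k = 2 powr (real k / 2) * Gamma (real k / 2)"

lemma chi2_normalizer_pos: "0 < k \<Longrightarrow> 0 < chi2_normalizer k"
  unfolding chi2_normalizer_def by (intro mult_pos_pos Gamma_real_pos) auto

lemma chi2_normalizer_add_2:
  assumes "0 < k"
  shows "chi2_normalizer (k + 2) = real k * chi2_normalizer k"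
proof -
  have "real k / 2 \<notin> \<int>\<^sub>\<le>\<^sub>0"
    using assms nonpos_Ints_nonpos by force
  then show ?thesis
    using Gamma_plus1[of "real k / 2"]
    by (simp add: chi2_normalizer_def add_divide_distrib powr_add add.commute)
qed

lemma chi2_density_eq:
  "0 \<le> t \<Longrightarrow> chi2_density k t = t powr (real k / 2 - 1) * exp (- t / 2) / chi2_normalizer k"
  by (auto simp: chi2_density_def chi2_normalizer_def)

lemma chi2_density_nonneg: "0 < k \<Longrightarrow> 0 \<le> chi2_density k t"
  using chi2_normalizer_pos[of k] by (auto simp: chi2_density_def chi2_normalizer_def)

lemma chi2_density_has_integral:
  assumes "0 < k" "0 \<le> X"
  shows "(chi2_density k has_integral
           integral {0..X} (\<lambda>t. t powr (real k / 2 - 1) * exp (- t / 2)) / chi2_normalizer k) {0..X}"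
proof -
  have "(\<lambda>t. t powr (real k / 2 - 1) * exp (- t / 2)) integrable_on {0..X}"
    using has_integral_powr_exp_by_parts[of "real k / 2" X] assms by auto
  then have "((\<lambda>t. t powr (real k / 2 - 1) * exp (- t / 2) / chi2_normalizer k) has_integral
      integral {0..X} (\<lambda>t. t powr (real k / 2 - 1) * exp (- t / 2)) / chi2_normalizer k) {0..X}"
    by (intro has_integral_divide integrable_integral)
  then show ?thesis
    by (rule has_integral_eq[rotated]) (simp add: chi2_density_eq)
qed

lemma chi2_CDF_eq_integral:
  assumes "0 < k" "0 \<le> X"
  shows "chi2_CDF k X = integral {0..X} (chi2_density k)"
proof -
  have "(\<lambda>t. indicator {..X} t *\<^sub>R chi2_density k t) = (\<lambda>t. indicator {0..X} t *\<^sub>R chi2_density k t)"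
    by (auto simp: indicator_def chi2_density_def)
  then have "chi2_CDF k X = (LINT t:{0..X}|lborel. chi2_density k t)"
    unfolding chi2_CDF_def set_lebesgue_integral_def by simp
  moreover have "chi2_density k absolutely_integrable_on {0..X}"
    using chi2_density_has_integral[OF assms] chi2_density_nonneg[OF assms(1)]
    by (intro nonnegative_absolutely_integrable_1) auto
  then have "set_integrable lborel {0..X} (chi2_density k)"
    unfolding set_integrable_def absolutely_integrable_on_def
    by (subst integrable_completion[symmetric])
       (auto simp: chi2_density_def intro!: borel_measurable_times)
  ultimately show ?thesis
    by (simp add: set_borel_integral_eq_integral(2))
qed

lemma chi2_CDF_eq_kernel_integral:
  assumes "0 < k" "0 \<le> X"
  shows "chi2_CDF k X = integral {0..X} (\<lambda>t. t powr (real k / 2 - 1) * exp (- t / 2)) / chi2_normalizer k"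
  using chi2_CDF_eq_integral[OF assms] chi2_density_has_integral[OF assms] by (simp add: integral_unique)

lemma chi2_CDF_neg: "X < 0 \<Longrightarrow> chi2_CDF k X = 0"
proof -
  assume "X < 0"
  then have "(\<lambda>t. indicator {..X} t *\<^sub>R chi2_density k t) = (\<lambda>t. 0)"
    by (auto simp: indicator_def chi2_density_def)
  then show ?thesis unfolding chi2_CDF_def set_lebesgue_integral_def by simp
qed

lemma chi2_CDF_mono:
  assumes "0 < k" "x \<le> y"
  shows "chi2_CDF k x \<le> chi2_CDF k y"
proof -
  have int: "chi2_density k integrable_on {0..X}" if "0 \<le> X" for X
    using chi2_density_has_integral[OF assms(1) that] by blast
  show ?thesis
  proof (cases "0 \<le> x")
    case True
    then show ?thesis
      using assms int chi2_density_nonneg[OF assms(1)]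
      by (simp add: chi2_CDF_eq_integral integral_subset_le)
  next
    case False
    then show ?thesis
      using assms int chi2_density_nonneg[OF assms(1)]
      by (cases "0 \<le> y") (simp_all add: chi2_CDF_neg chi2_CDF_eq_integral integral_nonneg)
  qed
qed

lemma chi2_CDF_dof_add_2_le:
  assumes "0 < k"
  shows "chi2_CDF (k + 2) (real (k + 2)) \<le> chi2_CDF k (real k)"
proof -
  define a where "a = real k / 2"
  let ?g = "\<lambda>t::real. t powr a * exp (- t / 2)"
  let ?I = "integral {0..real k} ?g"
  have "0 < a" using assms by (simp add: a_def)
  have kernel: "real (k + 2) / 2 - 1 = a" "real k / 2 - 1 = a - 1"
    by (simp_all add: a_def field_simps)
  have int_g: "?g integrable_on {0..real k + 2}"
    using \<open>0 < a\<close> by (intro integrable_continuous_interval continuous_on_powr_exp)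
  \<comment> \<open>the kernel peaks at \<open>2a = k\<close>, so the extra mass is at most twice the boundary term of the
    integration by parts below\<close>
  have "integral {real k..real k + 2} ?g \<le> integral {real k..real k + 2} (\<lambda>t. (2 * a) powr a * exp (- a))"
    using powr_exp_le_mode[OF \<open>0 < a\<close>]
    by (intro integral_le integrable_on_subinterval[OF int_g]) auto
  then have tail: "integral {real k..real k + 2} ?g \<le> 2 * (real k powr a * exp (- real k / 2))"
    by (simp add: a_def)
  have split: "integral {0..real k + 2} ?g = ?I + integral {real k..real k + 2} ?g"
    by (rule Henstock_Kurzweil_Integration.integral_combine[symmetric, OF _ _ int_g]) auto
  have "chi2_CDF (k + 2) (real (k + 2))
      = integral {0..real (k + 2)} (\<lambda>t. t powr (real (k + 2) / 2 - 1) * exp (- t / 2)) / chi2_normalizer (k + 2)"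
    by (rule chi2_CDF_eq_kernel_integral) auto
  also have "\<dots> = (?I + integral {real k..real k + 2} ?g) / (real k * chi2_normalizer k)"
    unfolding kernel(1) chi2_normalizer_add_2[OF assms] split[symmetric] by (simp add: add.commute)
  also have "\<dots> \<le> (?I + 2 * (real k powr a * exp (- real k / 2))) / (real k * chi2_normalizer k)"
    using tail assms chi2_normalizer_pos[of k] by (intro divide_right_mono) auto
  also have "\<dots> = (real k powr a * exp (- real k / 2) / a + ?I / (2 * a)) / chi2_normalizer k"
    using assms chi2_normalizer_pos[of k] by (simp add: a_def field_simps)
  also have "\<dots> = chi2_CDF k (real k)"
    using integral_unique[OF has_integral_powr_exp_by_parts[OF \<open>0 < a\<close>, of "real k"]] assms
    by (simp add: chi2_CDF_eq_kernel_integral kernel(2))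
  finally show ?thesis .
qed

lemma exp_neg_le_quadratic:
  fixes x :: real
  assumes "0 \<le> x"
  shows "exp (- x) \<le> 1 - x + x\<^sup>2 / 2"
proof -
  have pos: "0 < 1 + x + x\<^sup>2 / 2" using assms by (simp add: add_pos_nonneg)
  have "(1 + x + x\<^sup>2 / 2) * (1 - x + x\<^sup>2 / 2) = 1 + x ^ 4 / 4"
    by (simp add: algebra_simps power2_eq_square power4_eq_xxxx)
  then have "1 \<le> (1 + x + x\<^sup>2 / 2) * (1 - x + x\<^sup>2 / 2)"
    by simp
  then have "1 / (1 + x + x\<^sup>2 / 2) \<le> 1 - x + x\<^sup>2 / 2"
    using pos by (simp add: field_simps)
  moreover have "exp (- x) \<le> 1 / (1 + x + x\<^sup>2 / 2)"
    using exp_lower_Taylor_quadratic[OF assms] pos by (simp add: exp_minus field_simps)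
  ultimately show ?thesis by linarith
qed

lemma chi2_CDF_1_1_less: "chi2_CDF 1 1 < 7 / 10"
proof -
  let ?g = "\<lambda>t::real. t powr (- 1 / 2) * exp (- t / 2)"
  let ?h = "\<lambda>t::real. t powr (- 1 / 2) - t powr (1 / 2) / 2 + t powr (3 / 2) / 8"
  have h: "(?h has_integral 2 - (2 / 3) / 2 + (2 / 5) / 8) {0..1}"
    using has_integral_powr_from_0[of "- 1 / 2" 1] has_integral_powr_from_0[of "1 / 2" 1]
      has_integral_powr_from_0[of "3 / 2" 1]
    by (intro has_integral_add has_integral_diff has_integral_divide) auto
  have "?g t \<le> ?h t" if "t \<in> {0..1}" for t
  proof (cases "t = 0")
    case False
    have "?g t \<le> t powr (- 1 / 2) * (1 - t / 2 + (t / 2)\<^sup>2 / 2)"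
      using that exp_neg_le_quadratic[of "t / 2"] by (intro mult_left_mono) auto
    also have "\<dots> = ?h t"
      using False that powr_add[of t "- 1 / 2" 1] powr_add[of t "- 1 / 2" 2]
      by (simp add: algebra_simps power2_eq_square)
    finally show ?thesis .
  qed simp
  moreover have "?g integrable_on {0..1}"
    using chi2_density_has_integral[of 1 1] has_integral_powr_exp_by_parts[of "1 / 2" 1] by auto
  ultimately have "integral {0..1} ?g \<le> integral {0..1} ?h"
    using h by (intro integral_le) auto
  also have "\<dots> = 103 / 60"
    using h by (simp add: integral_unique)
  finally have "integral {0..1} ?g \<le> 103 / 60" .
  moreover have "103 / 60 < 7 / 10 * chi2_normalizer 1"
  proof -
    have "(103 / 60 :: real)\<^sup>2 < 49 / 50 * pi"
      using pi_approx by (simp add: power2_eq_square)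
    also have "\<dots> = (7 / 10 * (sqrt 2 * sqrt pi))\<^sup>2"
      by (simp only: power_mult_distrib real_sqrt_pow2 pi_ge_zero) (simp add: power2_eq_square)
    finally have "(103 / 60 :: real)\<^sup>2 < (7 / 10 * (sqrt 2 * sqrt pi))\<^sup>2" .
    then have "103 / 60 < 7 / 10 * (sqrt 2 * sqrt pi)"
      by (rule power2_less_imp_less) simp
    then show ?thesis
      by (simp add: chi2_normalizer_def Gamma_one_half_real powr_half_sqrt)
  qed
  ultimately show ?thesis
    using chi2_normalizer_pos[of 1] by (simp add: chi2_CDF_eq_kernel_integral divide_less_eq)
qed

lemma chi2_CDF_2_2_less: "chi2_CDF 2 2 < 7 / 10"
proof -
  have ftc: "((\<lambda>t. exp (- t / 2)) has_integral (- 2 * exp (- 2 / 2)) - (- 2 * exp (- 0 / 2))) {0..2::real}"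
    by (rule fundamental_theorem_of_calculus_interior)
       (auto intro!: continuous_intros derivative_eq_intros
         simp: has_real_derivative_iff_has_vector_derivative[symmetric])
  have "integral {0..2} (\<lambda>t::real. t powr 0 * exp (- t / 2)) \<le> integral {0..2} (\<lambda>t. exp (- t / 2))"
    using chi2_density_has_integral[of 2 2] has_integral_powr_exp_by_parts[of 1 2] ftc
    by (intro integral_le) (auto simp: powr_def)
  moreover have "exp (-1 :: real) > 100 / 272"
    using e_less_272 by (simp add: exp_minus field_simps)
  ultimately show ?thesis
    using integral_unique[OF ftc] by (simp add: chi2_CDF_eq_kernel_integral chi2_normalizer_def)
qed

lemma chi2_CDF_dof_less: "0 < k \<Longrightarrow> chi2_CDF k (real k) < 7 / 10"
proof (induction k rule: less_induct)
  case (less k)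
  show ?case
  proof (cases "k \<le> 2")
    case True
    with less.prems have "k = 1 \<or> k = 2" by auto
    then show ?thesis using chi2_CDF_1_1_less chi2_CDF_2_2_less by auto
  next
    case False
    define m where "m = k - 2"
    have "k = m + 2" "0 < m" using False by (auto simp: m_def)
    then show ?thesis using less.IH[of m] chi2_CDF_dof_add_2_le[of m] by simp
  qed
qed

lemma chi2_quantile_gt_dof:
  assumes "0 < k" "7 / 10 \<le> chi2_CDF k c"
  shows "real k < c"
  using chi2_CDF_mono[OF assms(1), of c "real k"] chi2_CDF_dof_less[OF assms(1)] assms(2)
  by (cases "real k < c") auto

theorem corollary1:
  fixes M :: "'a measure" and N :: "'w measure"
    and W :: "'n::finite \<Rightarrow> 'a \<Rightarrow> 'w"
    and g :: "'n \<Rightarrow> 'b \<Rightarrow> 'w \<Rightarrow> real^'k"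
    and \<beta> :: 'b and \<alpha> c :: real
  defines "G \<equiv> \<lambda>\<omega>. (\<chi> i. g i \<beta> (W i \<omega>)) :: real^'k^'n"
  assumes "prob_space M"
    and "prob_space.indep_vars M (\<lambda>_. N) W UNIV"
    and "\<And>i. g i \<beta> \<in> borel_measurable N"
    and "0 < \<alpha>" and "\<alpha> < 0.3"
    and "chi2_CDF CARD('k) c = 1 - \<alpha>"
    and "\<And>\<omega>. \<omega> \<in> space M \<Longrightarrow> rank (Pmat (G \<omega>)) = CARD('k)"
    and "\<And>\<omega>. \<omega> \<in> space M \<Longrightarrow> sigma2_stat (G \<omega>) > 0"
    and "{\<omega> \<in> space M. phi1 c (G \<omega>) = 1} \<in> sets M"
    and "{\<omega> \<in> space M. phi2 c (G \<omega>) = 1} \<in> sets M"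
  shows "measure M {\<omega> \<in> space M. phi1 c (G \<omega>) = 1}
           \<ge> measure M {\<omega> \<in> space M. phi2 c (G \<omega>) = 1}"
proof -
  interpret prob_space M by fact
  have "real CARD('k) < c"
    by (rule chi2_quantile_gt_dof) (use assms in auto)
  then have "phi1 c (G \<omega>) = 1" if "\<omega> \<in> space M" "phi2 c (G \<omega>) = 1" for \<omega>
    using that assms(8,9) by (intro phi1_eq_1_if_phi2_eq_1 sigma2_stat_le_2)
  then have "{\<omega> \<in> space M. phi2 c (G \<omega>) = 1} \<subseteq> {\<omega> \<in> space M. phi1 c (G \<omega>) = 1}"
    by blast
  then show ?thesis using assms(10) by (rule finite_measure_mono)
qed

end
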